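(* Let $b>0$, let $h:[0,b]\to[0,\infty)$ be a concave function that is not identically zero, let $\alpha,\beta>0$, and let $\mathrm{g}_\alpha(h)=\frac{\int_0^b t h(t)^\alpha dt}{\int_0^b h(t)^\alpha dt}$. Then there exist $\gamma<\delta$ and $c>0$ such that the function $g(t)=c(\delta-t)$ on $[\gamma,\delta]$ satisfies: (i) $g(\mathrm{g}_\alpha(h))=h(\mathrm{g}_\alpha(h))$; (ii) $\int_\gamma^\delta g(t)^\beta dt=\int_0^b h(t)^\beta dt$; (iii) $\int_{\mathrm{g}_\alpha(h)}^\delta g(t)^\beta dt=\int_{\mathrm{g}_\alpha(h)}^b h(t)^\beta dt$. Moreover, $0\leq\gamma\leq\mathrm{g}_\alpha(h)\leq b\leq\delta$, and, extending $h$ by $0$ on $(b,\delta]$ and $g$ by $0$ on $[0,\gamma)$, one has $\int_s^\delta h(t)^\beta dt\leq\int_s^\delta g(t)^\beta dt$ for every $s\in[0,\delta]$. *)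

theory Defs
  imports "HOL-Analysis.Analysis"
begin

definition galpha :: "real \<Rightarrow> real \<Rightarrow> (real \<Rightarrow> real) \<Rightarrow> real" where
  "galpha \<alpha> b h = integral {0..b} (\<lambda>t. t * h t powr \<alpha>) / integral {0..b} (\<lambda>t. h t powr \<alpha>)"

end

theory Submission
  imports Defs
begin

text \<open>
  Let g = g_\<alpha>(h); positivity of h on (0, b) gives 0 < g < b. Among the lines through (g, h g)
  with negative slope c, the integral of the \<beta>-th power over the part right of g is explicit and
  decreasing in c, so exactly one of them matches the integral of h^\<beta> over [g, b]. Concavity
  makes this line dominate h on [0, g]: otherwise a steeper secant from the left would bound h from
  above beyond g and leave too little mass there. Its foot \<delta> lies beyond b because the chord from
  (g, h g) to (b, 0) stays below h. Then \<gamma> is chosen by continuity so that the line carries the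
  whole mass of h^\<beta>. Finally, on [0, g] and on [g, \<delta>] the difference between the two
  profiles changes sign at most once, from + to -, and equal total integrals of such functions
  are ordered on every tail.
\<close>

lemma has_integral_powr_line:
  fixes c d a \<beta> :: real
  assumes "c > 0" "a \<le> d" "\<beta> > -1"
  shows "((\<lambda>t. (c * (d - t)) powr \<beta>) has_integral c powr \<beta> * (d - a) powr (\<beta> + 1) / (\<beta> + 1)) {a..d}"
proof -
  define F where "F t = - (c powr \<beta> * (d - t) powr (\<beta> + 1) / (\<beta> + 1))" for t
  have "((\<lambda>t. (c * (d - t)) powr \<beta>) has_integral F d - F a) {a..d}"
  proof (rule fundamental_theorem_of_calculus_interior)
    show "continuous_on {a..d} F"
      unfolding F_def using assms by (intro continuous_intros continuous_on_powr') auto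
    fix x assume "x \<in> {a<..<d}"
    then have "(F has_real_derivative (c * (d - x)) powr \<beta>) (at x)"
      unfolding F_def using assms by (auto intro!: derivative_eq_intros simp: powr_mult)
    then show "(F has_vector_derivative (c * (d - x)) powr \<beta>) (at x)"
      by (simp add: has_real_derivative_iff_has_vector_derivative)
  qed fact
  moreover have "F d - F a = c powr \<beta> * (d - a) powr (\<beta> + 1) / (\<beta> + 1)"
    unfolding F_def using assms by simp
  ultimately show ?thesis by simp
qed

lemma powr_line_integral_value:
  fixes c y \<beta> :: real
  assumes "0 < c" "0 \<le> y"
  shows "c powr \<beta> * (y / c) powr (\<beta> + 1) / (\<beta> + 1) = y powr (\<beta> + 1) / ((\<beta> + 1) * c)"
  using assms by (simp add: powr_divide powr_add)

lemma powr_line_integral_attains: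
  fixes c d g V \<beta> :: real
  assumes "0 < c" "\<beta> > -1" "0 \<le> g" "g < d"
    and "integral {g..d} (\<lambda>t. (c * (d - t)) powr \<beta>) \<le> V"
    and "V \<le> integral {0..d} (\<lambda>t. (c * (d - t)) powr \<beta>)"
  shows "\<exists>\<gamma>\<in>{0..g}. integral {\<gamma>..d} (\<lambda>t. (c * (d - t)) powr \<beta>) = V"
proof -
  define F where "F a = c powr \<beta> * (d - a) powr (\<beta> + 1) / (\<beta> + 1)" for a
  have F: "integral {a..d} (\<lambda>t. (c * (d - t)) powr \<beta>) = F a" if "a \<le> d" for a
    unfolding F_def using has_integral_powr_line[OF assms(1) that assms(2)] by (rule integral_unique)
  have "continuous_on {0..g} F"
    unfolding F_def using assms by (intro continuous_intros) auto
  then obtain \<gamma> where "0 \<le> \<gamma>" "\<gamma> \<le> g" "F \<gamma> = V"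
    using IVT2'[of F g V 0] assms F by auto
  then show ?thesis
    using F[of \<gamma>] assms(4) by auto
qed

lemma concave_on_ge_affine:
  fixes h :: "real \<Rightarrow> real"
  assumes "concave_on S h" "x \<in> S" "y \<in> S" "x \<le> t" "t \<le> y"
    and "h x \<ge> m * x + q" "h y \<ge> m * y + q"
  shows "h t \<ge> m * t + q"
proof (cases "x = y")
  case True
  with assms show ?thesis by simp
next
  case False
  define l where "l = (t - x) / (y - x)"
  have l: "0 \<le> l" "l \<le> 1"
    using assms False unfolding l_def by (auto simp: divide_simps)
  have "l * (y - x) = t - x"
    using False unfolding l_def by simp
  then have t: "(1 - l) * x + l * y = t"
    by (simp add: algebra_simps)
  have "m * t + q = (1 - l) * (m * x + q) + l * (m * y + q)"
    by (simp add: algebra_simps flip: t)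
  also have "\<dots> \<le> (1 - l) * h x + l * h y"
    using assms l by (intro add_mono mult_left_mono) auto
  also have "\<dots> \<le> h t"
    using concave_onD[OF assms(1) l assms(2,3)] t by simp
  finally show ?thesis .
qed

lemma concave_on_le_affine_beyond:
  fixes h :: "real \<Rightarrow> real"
  assumes "concave_on S h" "x \<in> S" "t \<in> S" "x < y" "y \<le> t"
    and "h x \<ge> m * x + q" "h y \<le> m * y + q"
  shows "h t \<le> m * t + q"
proof -
  define l where "l = (y - x) / (t - x)"
  have l: "0 < l" "l \<le> 1"
    using assms unfolding l_def by (auto simp: divide_simps)
  have "l * (t - x) = y - x"
    using assms unfolding l_def by simp
  then have y: "(1 - l) * x + l * t = y"
    by (simp add: algebra_simps)
  have "(1 - l) * (m * x + q) + l * h t \<le> (1 - l) * h x + l * h t"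
    using assms l by (intro add_mono mult_left_mono) auto
  also have "\<dots> \<le> h y"
    using concave_onD[OF assms(1) less_imp_le[OF l(1)] l(2) assms(2,3)] y by simp
  also have "\<dots> \<le> (1 - l) * (m * x + q) + l * (m * t + q)"
    using assms(7) by (simp add: algebra_simps flip: y)
  finally show ?thesis
    using l(1) by simp
qed

lemma integrable_on_Icc_if_bounded_continuous_on_interior:
  fixes f :: "real \<Rightarrow> real"
  assumes "continuous_on {a<..<b} f" "\<And>x. x \<in> {a<..<b} \<Longrightarrow> \<bar>f x\<bar> \<le> M"
  shows "f integrable_on {a..b}"
proof -
  have "f absolutely_integrable_on {a<..<b}"
    using assms continuous_imp_measurable_on_sets_lebesgue[OF assms(1)]
    by (intro measurable_bounded_by_integrable_imp_absolutely_integrable[where g = "\<lambda>_. M"])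
      (auto simp: integrable_on_open_interval_real)
  then show ?thesis
    by (simp add: absolutely_integrable_on_def integrable_on_open_interval_real)
qed

lemma integral_pos_if_pos_on_subinterval:
  fixes f :: "real \<Rightarrow> real"
  assumes "f integrable_on {a..b}" "\<And>t. t \<in> {a..b} \<Longrightarrow> 0 \<le> f t"
    and "a \<le> c" "c < d" "d \<le> b" "continuous_on {c..d} f" "\<And>t. t \<in> {c..d} \<Longrightarrow> 0 < f t"
  shows "0 < integral {a..b} f"
proof -
  obtain t0 where t0: "t0 \<in> {c..d}" "\<And>t. t \<in> {c..d} \<Longrightarrow> f t0 \<le> f t"
    using continuous_attains_inf[of "{c..d}" f] assms(4,6) by auto
  have "0 < (d - c) * f t0"
    using assms(4,7) t0(1) by simp
  also have "\<dots> = integral {c..d} (\<lambda>_. f t0)"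
    using assms(4) by simp
  also have "\<dots> \<le> integral {c..d} f"
    using t0 by (intro integral_le integrable_continuous_interval assms(6)) auto
  also have "\<dots> \<le> integral {a..b} f"
    using assms integrable_continuous_interval[OF assms(6)] by (intro integral_subset_le) auto
  finally show ?thesis .
qed

lemma integral_tail_le_if_single_crossing:
  fixes F G :: "real \<Rightarrow> real"
  assumes "F integrable_on {a..d}" "G integrable_on {a..d}"
    and "integral {a..d} F \<le> integral {a..d} G"
    and crossing: "\<And>x y. a \<le> x \<Longrightarrow> x \<le> y \<Longrightarrow> y \<le> d \<Longrightarrow> G y < F y \<Longrightarrow> G x \<le> F x"
    and s: "s \<in> {a..d}"
  shows "integral {s..d} F \<le> integral {s..d} G"
proof -
  have F: "F integrable_on {x..y}" and G: "G integrable_on {x..y}" if "a \<le> x" "y \<le> d" for x y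
    using that assms(1,2) by (auto intro: integrable_on_subinterval)
  show ?thesis
  proof (cases "\<forall>y\<in>{s..d}. F y \<le> G y")
    case True
    then show ?thesis
      using F G s by (intro integral_le) auto
  next
    case False
    then obtain y where y: "y \<in> {s..d}" "G y < F y"
      by (auto simp: not_le)
    have "integral {a..s} G \<le> integral {a..s} F"
      using F G s y crossing[of _ y] by (intro integral_le) auto
    moreover have "integral {a..s} F + integral {s..d} F = integral {a..d} F"
      and "integral {a..s} G + integral {s..d} G = integral {a..d} G"
      using assms(1,2) s by (auto intro: Henstock_Kurzweil_Integration.integral_combine)
    ultimately show ?thesis
      using assms(3) by linarith
  qed
qed

locale concave_profile =
  fixes b :: real and h :: "real \<Rightarrow> real"
  assumes b_pos: "0 < b"
    and concave: "concave_on {0..b} h"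
    and nonneg: "\<And>t. t \<in> {0..b} \<Longrightarrow> 0 \<le> h t"
    and not_zero: "\<exists>t\<in>{0..b}. h t \<noteq> 0"
begin

lemma pos_interior:
  assumes t: "t \<in> {0<..<b}"
  shows "0 < h t"
proof -
  obtain t0 where t0: "t0 \<in> {0..b}" "0 < h t0"
    using not_zero nonneg by (metis atLeastAtMost_iff order_le_less)
  show ?thesis
  proof (cases "t \<le> t0")
    case True
    with t have "0 < t0" by simp
    define k where "k = h t0 / t0"
    have at_0: "h 0 \<ge> k * 0 + 0"
      using nonneg[of 0] b_pos by simp
    have at_t0: "h t0 \<ge> k * t0 + 0"
      using \<open>0 < t0\<close> unfolding k_def by simp
    have "h t \<ge> k * t + 0"
      using t t0 True b_pos by (intro concave_on_ge_affine[OF concave _ _ _ _ at_0 at_t0]) auto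
    moreover have "0 < k * t"
      using t t0 \<open>0 < t0\<close> unfolding k_def by simp
    ultimately show ?thesis
      by linarith
  next
    case False
    define k where "k = h t0 / (b - t0)"
    have "0 < k" "k * (b - t0) = h t0"
      using t t0 False unfolding k_def by auto
    then have at_t0: "h t0 \<ge> - k * t0 + k * b"
      by (simp add: algebra_simps)
    have at_b: "h b \<ge> - k * b + k * b"
      using nonneg[of b] b_pos by simp
    have "h t \<ge> - k * t + k * b"
      using t t0 False b_pos by (intro concave_on_ge_affine[OF concave _ _ _ _ at_t0 at_b]) auto
    moreover have "0 < - k * t + k * b"
      using t \<open>0 < k\<close> by (simp add: algebra_simps)
    ultimately show ?thesis
      by linarith
  qed
qed

lemma le_twice_midpoint:
  assumes t: "t \<in> {0..b}"
  shows "h t \<le> 2 * h (b / 2)"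
proof -
  have mid: "(1 - 1/2) *\<^sub>R t + (1/2) *\<^sub>R (b - t) = b / 2"
    by (simp add: diff_divide_distrib)
  have "(1 - 1/2) * h t + 1/2 * h (b - t) \<le> h (b / 2)"
    using concave_onD[OF concave, of "1/2" t "b - t"] t unfolding mid by auto
  then show ?thesis
    using nonneg[of "b - t"] t by simp
qed

lemma continuous_on_interior: "continuous_on {0<..<b} h"
proof -
  have "convex_on {0<..<b} (\<lambda>x. - h x)"
    using concave unfolding concave_on_def by (rule convex_on_subset) auto
  then have "continuous_on {0<..<b} (\<lambda>x. - (- h x))"
    by (intro continuous_on_minus convex_on_continuous) auto
  then show ?thesis
    by simp
qed

lemma continuous_on_interior_mult_powr:
  assumes "continuous_on {0..b} w"
  shows "continuous_on {0<..<b} (\<lambda>t. w t * h t powr p)"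
  using pos_interior
  by (intro continuous_intros continuous_on_subset[OF assms] continuous_on_interior) force+

lemma mult_powr_integrable:
  assumes w: "continuous_on {0..b} w" and p: "0 \<le> p"
  shows "(\<lambda>t. w t * h t powr p) integrable_on {0..b}"
proof -
  obtain W where W: "\<And>t. t \<in> {0..b} \<Longrightarrow> \<bar>w t\<bar> \<le> W"
    using continuous_on_compact_bound[OF compact_Icc w] by (metis real_norm_def)
  show ?thesis
  proof (rule integrable_on_Icc_if_bounded_continuous_on_interior)
    show "continuous_on {0<..<b} (\<lambda>t. w t * h t powr p)"
      using continuous_on_interior_mult_powr[OF w] .
    fix t assume t: "t \<in> {0<..<b}"
    have "h t powr p \<le> (2 * h (b / 2)) powr p"
      using t p nonneg[of t] le_twice_midpoint[of t] by (intro powr_mono2) auto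
    then show "\<bar>w t * h t powr p\<bar> \<le> W * (2 * h (b / 2)) powr p"
      using t W[of t] by (simp add: abs_mult mult_mono)
  qed
qed

lemma powr_integrable: "0 \<le> p \<Longrightarrow> (\<lambda>t. h t powr p) integrable_on {0..b}"
  using mult_powr_integrable[of "\<lambda>_. 1"] by simp

lemma mult_powr_integral_pos:
  assumes w: "continuous_on {0..b} w" and p: "0 \<le> p"
    and "\<And>t. t \<in> {0..b} \<Longrightarrow> 0 \<le> w t" "\<And>t. t \<in> {0<..<b} \<Longrightarrow> 0 < w t"
  shows "0 < integral {0..b} (\<lambda>t. w t * h t powr p)"
proof (rule integral_pos_if_pos_on_subinterval[of _ 0 b "b / 4" "3 * b / 4"])
  show "continuous_on {b / 4..3 * b / 4} (\<lambda>t. w t * h t powr p)"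
    using b_pos by (intro continuous_on_subset[OF continuous_on_interior_mult_powr[OF w]]) auto
  fix t assume "t \<in> {b / 4..3 * b / 4}"
  then have t: "t \<in> {0<..<b}"
    using b_pos by auto
  show "0 < w t * h t powr p"
    using assms(4)[OF t] pos_interior[OF t] by simp
qed (use assms mult_powr_integrable b_pos in auto)

lemma galpha_in_interior:
  assumes "0 \<le> \<alpha>"
  shows "galpha \<alpha> b h \<in> {0<..<b}"
proof -
  define I0 where "I0 = integral {0..b} (\<lambda>t. h t powr \<alpha>)"
  define I1 where "I1 = integral {0..b} (\<lambda>t. t * h t powr \<alpha>)"
  have "0 < integral {0..b} (\<lambda>t. 1 * h t powr \<alpha>)"
    using assms by (intro mult_powr_integral_pos) auto
  then have "0 < I0"
    unfolding I0_def by simp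
  have "0 < I1"
    unfolding I1_def using assms by (intro mult_powr_integral_pos continuous_intros) auto
  have "0 < integral {0..b} (\<lambda>t. (b - t) * h t powr \<alpha>)"
    using assms by (intro mult_powr_integral_pos continuous_intros) auto
  also have "\<dots> = b * I0 - I1"
    using integrable_on_cmult_left[OF powr_integrable[OF assms], of b]
      mult_powr_integrable[OF continuous_on_id assms]
    unfolding I0_def I1_def left_diff_distrib by (simp add: integral_diff)
  finally show ?thesis
    using \<open>0 < I0\<close> \<open>0 < I1\<close> unfolding galpha_def I0_def[symmetric] I1_def[symmetric]
    by (simp add: divide_less_eq)
qed

lemma tail_integral_ge_chord:
  assumes g: "g \<in> {0<..<b}" and \<beta>: "0 \<le> \<beta>"
  shows "h g powr \<beta> * (b - g) / (\<beta> + 1) \<le> integral {g..b} (\<lambda>t. h t powr \<beta>)"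
proof -
  define k where "k = h g / (b - g)"
  have "0 < k" and k: "k * (b - g) = h g"
    using g pos_interior[OF g] unfolding k_def by auto
  then have at_g: "h g \<ge> - k * g + k * b"
    by (simp add: algebra_simps)
  have at_b: "h b \<ge> - k * b + k * b"
    using nonneg[of b] b_pos by simp
  have chord: "k * (b - t) \<le> h t" if "t \<in> {g..b}" for t
    using concave_on_ge_affine[OF concave _ _ _ _ at_g at_b, of t] g that
    by (simp add: algebra_simps)
  have "b - g = h g / k"
    using k \<open>0 < k\<close> by (simp add: eq_divide_eq mult.commute)
  then have "k powr \<beta> * (b - g) powr (\<beta> + 1) = h g powr \<beta> * (b - g)"
    using \<open>0 < k\<close> pos_interior[OF g] by (simp add: powr_divide powr_add)
  then have line: "((\<lambda>t. (k * (b - t)) powr \<beta>) has_integral h g powr \<beta> * (b - g) / (\<beta> + 1)) {g..b}"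
    using has_integral_powr_line[OF \<open>0 < k\<close>, of g b \<beta>] g \<beta> by simp
  have "integral {g..b} (\<lambda>t. (k * (b - t)) powr \<beta>) \<le> integral {g..b} (\<lambda>t. h t powr \<beta>)"
    using g \<beta> \<open>0 < k\<close> chord
    by (intro integral_le has_integral_integrable[OF line]
        integrable_on_subinterval[OF powr_integrable[OF \<beta>]] powr_mono2) auto
  then show ?thesis
    using integral_unique[OF line] by simp
qed

lemma tail_integral_le_line:
  assumes g: "g \<in> {0..b}" and "0 < k" "0 \<le> \<beta>"
    and below: "\<And>t. t \<in> {g..b} \<Longrightarrow> h t \<le> k * (d - t)"
  shows "integral {g..b} (\<lambda>t. h t powr \<beta>) \<le> k powr \<beta> * (d - g) powr (\<beta> + 1) / (\<beta> + 1)"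
proof -
  define L where "L t = (k * (d - t)) powr \<beta>" for t
  have "0 \<le> k * (d - b)"
    using nonneg[of b] below[of b] g by auto
  then have "b \<le> d"
    using \<open>0 < k\<close> by (simp add: zero_le_mult_iff)
  have line: "(L has_integral k powr \<beta> * (d - g) powr (\<beta> + 1) / (\<beta> + 1)) {g..d}"
    unfolding L_def using has_integral_powr_line[OF \<open>0 < k\<close>, of g d \<beta>] g \<open>b \<le> d\<close> assms(3) by simp
  have L_integrable: "L integrable_on {g..b}"
    using \<open>b \<le> d\<close> by (intro integrable_on_subinterval[OF has_integral_integrable[OF line]]) auto
  have "integral {g..b} (\<lambda>t. h t powr \<beta>) \<le> integral {g..b} L"
    using L_integrable g assms(3) nonneg below unfolding L_def
    by (intro integral_le integrable_on_subinterval[OF powr_integrable] powr_mono2) auto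
  also have "\<dots> \<le> integral {g..d} L"
    using L_integrable has_integral_integrable[OF line] \<open>b \<le> d\<close> unfolding L_def
    by (intro integral_subset_le) auto
  finally show ?thesis
    using integral_unique[OF line] by simp
qed

lemma le_balanced_line_on_head:
  assumes g: "g \<in> {0<..<b}" and "0 \<le> \<beta>" "0 < c"
    and through: "c * (\<delta> - g) = h g"
    and balanced: "integral {g..b} (\<lambda>t. h t powr \<beta>) = c powr \<beta> * (\<delta> - g) powr (\<beta> + 1) / (\<beta> + 1)"
    and t: "t \<in> {0..g}"
  shows "h t \<le> c * (\<delta> - t)"
proof (rule ccontr)
  assume above: "\<not> h t \<le> c * (\<delta> - t)"
  \<comment> \<open>the secant through (t, h t) and (g, h g) is steeper than the line, hence carries less mass\<close>
  with through t have "t < g"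
    by (cases "t = g") auto
  define k where "k = (h t - h g) / (g - t)"
  define d where "d = g + h g / k"
  have "h t - h g > c * (g - t)"
    using above through by (simp add: algebra_simps)
  then have "c < k"
    unfolding k_def using \<open>t < g\<close> by (simp add: less_divide_eq)
  then have "0 < k"
    using \<open>0 < c\<close> by simp
  have "k * (g - t) = h t - h g"
    unfolding k_def using \<open>t < g\<close> by simp
  moreover have "k * d = k * g + h g"
    unfolding d_def using \<open>0 < k\<close> by (simp add: algebra_simps)
  ultimately have at_t: "h t \<ge> - k * t + k * d" and at_g: "h g \<le> - k * g + k * d"
    by (simp_all add: algebra_simps)
  have "integral {g..b} (\<lambda>t. h t powr \<beta>) \<le> k powr \<beta> * (d - g) powr (\<beta> + 1) / (\<beta> + 1)"
  proof (rule tail_integral_le_line)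
    fix s assume "s \<in> {g..b}"
    then show "h s \<le> k * (d - s)"
      using concave_on_le_affine_beyond[OF concave _ _ \<open>t < g\<close> _ at_t at_g, of s] t g
      by (simp add: algebra_simps)
  qed (use g \<open>0 < k\<close> assms(2) in auto)
  also have "\<dots> = h g powr (\<beta> + 1) / ((\<beta> + 1) * k)"
    unfolding d_def using powr_line_integral_value[OF \<open>0 < k\<close>] pos_interior[OF g] by simp
  also have "\<dots> < h g powr (\<beta> + 1) / ((\<beta> + 1) * c)"
    using \<open>c < k\<close> \<open>0 < c\<close> pos_interior[OF g] assms(2)
    by (intro divide_strict_left_mono mult_strict_left_mono) auto
  also have "\<dots> = integral {g..b} (\<lambda>t. h t powr \<beta>)"
  proof -
    have "\<delta> - g = h g / c"
      using through \<open>0 < c\<close> by (simp add: eq_divide_eq mult.commute)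
    then show ?thesis
      using balanced powr_line_integral_value[OF \<open>0 < c\<close>] pos_interior[OF g] by simp
  qed
  finally show False
    by simp
qed

lemma exists_balanced_line:
  assumes g: "g \<in> {0<..<b}" and \<beta>: "0 \<le> \<beta>"
  shows "\<exists>c \<delta>. 0 < c \<and> c * (\<delta> - g) = h g \<and> b \<le> \<delta> \<and>
    integral {g..b} (\<lambda>t. h t powr \<beta>) = c powr \<beta> * (\<delta> - g) powr (\<beta> + 1) / (\<beta> + 1)"
proof -
  define B where "B = integral {g..b} (\<lambda>t. h t powr \<beta>)"
  define c where "c = h g powr (\<beta> + 1) / ((\<beta> + 1) * B)"
  have "0 < h g"
    using pos_interior[OF g] .
  have chord: "h g powr \<beta> * (b - g) / (\<beta> + 1) \<le> B"
    unfolding B_def using tail_integral_ge_chord[OF g \<beta>] .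
  moreover have "0 < h g powr \<beta> * (b - g) / (\<beta> + 1)"
    using g \<beta> \<open>0 < h g\<close> by simp
  ultimately have "0 < B"
    by linarith
  then have "0 < c"
    unfolding c_def using \<beta> \<open>0 < h g\<close> by simp
  have "h g / c = (\<beta> + 1) * B / h g powr \<beta>"
    unfolding c_def using \<open>0 < h g\<close> by (simp add: powr_add)
  moreover have "b - g \<le> (\<beta> + 1) * B / h g powr \<beta>"
    using chord \<open>0 < h g\<close> \<beta> by (simp add: pos_le_divide_eq pos_divide_le_eq mult.commute)
  ultimately have "b - g \<le> h g / c"
    by simp
  moreover have "B = c powr \<beta> * (h g / c) powr (\<beta> + 1) / (\<beta> + 1)"
    using powr_line_integral_value[OF \<open>0 < c\<close>, of "h g" \<beta>] \<open>0 < B\<close> \<open>0 < h g\<close> \<beta>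
    unfolding c_def by simp
  ultimately show ?thesis
    using \<open>0 < c\<close> unfolding B_def
    by (intro exI[of _ c] exI[of _ "g + h g / c"]) auto
qed

lemma tail_integral_le_truncated_line:
  assumes "0 \<le> \<beta>" "0 < c" "0 \<le> \<gamma>" "\<gamma> \<le> g" "g \<le> b" "b \<le> \<delta>"
    and through: "c * (\<delta> - g) = h g"
    and above: "\<And>t. t \<in> {\<gamma>..g} \<Longrightarrow> h t \<le> c * (\<delta> - t)"
    and head: "integral {\<gamma>..g} (\<lambda>t. (c * (\<delta> - t)) powr \<beta>) = integral {0..g} (\<lambda>t. h t powr \<beta>)"
    and tail: "integral {g..\<delta>} (\<lambda>t. (c * (\<delta> - t)) powr \<beta>) = integral {g..b} (\<lambda>t. h t powr \<beta>)"
    and s: "s \<in> {0..\<delta>}"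
  shows "integral {s..\<delta>} (\<lambda>t. (if t \<le> b then h t else 0) powr \<beta>)
    \<le> integral {s..\<delta>} (\<lambda>t. (if t < \<gamma> then 0 else c * (\<delta> - t)) powr \<beta>)"
proof -
  define P where "P t = h t powr \<beta>" for t
  define L where "L t = (c * (\<delta> - t)) powr \<beta>" for t
  define H where "H t = (if t \<le> b then h t else 0) powr \<beta>" for t
  define G where "G t = (if t < \<gamma> then 0 else c * (\<delta> - t)) powr \<beta>" for t
  have P: "P integrable_on {0..b}"
    unfolding P_def using powr_integrable[OF assms(1)] .
  have L: "L integrable_on {\<gamma>..\<delta>}"
    unfolding L_def using has_integral_powr_line[OF assms(2), of \<gamma> \<delta> \<beta>] assms(1,4-6)
    by (auto intro: has_integral_integrable)
  have H: "integral {x..y} H = integral ({0..b} \<inter> {x..y}) P"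
    "H integrable_on {x..y}" if "0 \<le> x" for x y
  proof -
    have pointwise: "H t = (if t \<in> {0..b} then P t else 0)" if "t \<in> {x..y}" for t
      using that \<open>0 \<le> x\<close> unfolding H_def P_def by auto
    have "integral {x..y} H = integral {x..y} (\<lambda>t. if t \<in> {0..b} then P t else 0)"
      and "H integrable_on {x..y} \<longleftrightarrow> (\<lambda>t. if t \<in> {0..b} then P t else 0) integrable_on {x..y}"
      using pointwise by (fact integral_cong, fact integrable_cong)
    then show "integral {x..y} H = integral ({0..b} \<inter> {x..y}) P" "H integrable_on {x..y}"
      using integral_restrict_Int[of "{x..y}" "{0..b}" P] integrable_restrict_Int[of "{0..b}" P "{x..y}"]
        integrable_on_subinterval[OF P, of "max 0 x" "min b y"]
      by (simp_all add: Int_atLeastAtMost)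
  qed
  have G: "integral {x..y} G = integral ({\<gamma>..\<delta>} \<inter> {x..y}) L"
    "G integrable_on {x..y}" if "y \<le> \<delta>" for x y
  proof -
    have pointwise: "G t = (if t \<in> {\<gamma>..\<delta>} then L t else 0)" if "t \<in> {x..y}" for t
      using that \<open>y \<le> \<delta>\<close> unfolding G_def L_def by auto
    have "integral {x..y} G = integral {x..y} (\<lambda>t. if t \<in> {\<gamma>..\<delta>} then L t else 0)"
      and "G integrable_on {x..y} \<longleftrightarrow> (\<lambda>t. if t \<in> {\<gamma>..\<delta>} then L t else 0) integrable_on {x..y}"
      using pointwise by (fact integral_cong, fact integrable_cong)
    then show "integral {x..y} G = integral ({\<gamma>..\<delta>} \<inter> {x..y}) L" "G integrable_on {x..y}"
      using integral_restrict_Int[of "{x..y}" "{\<gamma>..\<delta>}" L] integrable_restrict_Int[of "{\<gamma>..\<delta>}" L "{x..y}"]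
        integrable_on_subinterval[OF L, of "max \<gamma> x" "min \<delta> y"]
      by (simp_all add: Int_atLeastAtMost)
  qed
  have "g \<le> \<delta>"
    using assms by linarith
  have H_head: "integral {0..g} H = integral {0..g} P"
    using H(1)[of 0 g] assms(5) by (simp add: Int_atLeastAtMost)
  have G_head: "integral {0..g} G = integral {\<gamma>..g} L"
    using G(1)[of g 0] \<open>g \<le> \<delta>\<close> assms(3) by (simp add: Int_atLeastAtMost)
  have H_tail: "integral {g..\<delta>} H = integral {g..b} P"
    using H(1)[of g \<delta>] assms by (simp add: Int_atLeastAtMost)
  have G_tail: "integral {g..\<delta>} G = integral {g..\<delta>} L"
    using G(1)[of \<delta> g] assms by (simp add: Int_atLeastAtMost)
  have "integral {s..\<delta>} H \<le> integral {s..\<delta>} G"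
  proof (cases "s \<le> g")
    case True
    have "integral {s..g} H \<le> integral {s..g} G"
    proof (rule integral_tail_le_if_single_crossing)
      show "integral {0..g} H \<le> integral {0..g} G"
        using H_head G_head head unfolding L_def P_def by simp
      fix x y assume xy: "0 \<le> x" "x \<le> y" "y \<le> g" and "G y < H y"
      have "y < \<gamma>"
      proof (rule ccontr)
        assume "\<not> y < \<gamma>"
        then have "H y \<le> G y"
          unfolding H_def G_def using xy assms(1,5) nonneg[of y] above[of y]
          by (auto intro: powr_mono2)
        with \<open>G y < H y\<close> show False
          by simp
      qed
      then show "G x \<le> H x"
        using xy unfolding G_def H_def by simp
    qed (use True s H G \<open>g \<le> \<delta>\<close> in auto)
    moreover have "integral {s..g} H + integral {g..\<delta>} H = integral {s..\<delta>} H"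
      and "integral {s..g} G + integral {g..\<delta>} G = integral {s..\<delta>} G"
      using True s H(2)[of s \<delta>] G(2)[of \<delta> s] \<open>g \<le> \<delta>\<close>
      by (auto intro: Henstock_Kurzweil_Integration.integral_combine)
    ultimately show ?thesis
      using H_tail G_tail tail unfolding L_def P_def by linarith
  next
    case False
    show ?thesis
    proof (rule integral_tail_le_if_single_crossing)
      show "integral {g..\<delta>} H \<le> integral {g..\<delta>} G"
        using H_tail G_tail tail unfolding L_def P_def by simp
      fix x y assume xy: "g \<le> x" "x \<le> y" "y \<le> \<delta>" and "G y < H y"
      have "y \<le> b"
        using \<open>G y < H y\<close> unfolding G_def H_def by (cases "y \<le> b") auto
      have "c * (\<delta> - y) < h y"
      proof (rule ccontr)
        assume "\<not> c * (\<delta> - y) < h y"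
        then have "H y \<le> G y"
          unfolding H_def G_def using xy assms(1,3,4) nonneg[of y] \<open>y \<le> b\<close>
          by (auto intro: powr_mono2)
        with \<open>G y < H y\<close> show False
          by simp
      qed
      then have at_y: "h y \<ge> - c * y + c * \<delta>"
        by (simp add: algebra_simps)
      have at_g: "h g \<ge> - c * g + c * \<delta>"
        using through by (simp add: algebra_simps)
      have "h x \<ge> - c * x + c * \<delta>"
        using xy assms(3-5) \<open>y \<le> b\<close>
        by (intro concave_on_ge_affine[OF concave _ _ _ _ at_g at_y]) auto
      then have "c * (\<delta> - x) \<le> h x" "0 \<le> c * (\<delta> - x)"
        using xy assms(2) by (simp_all add: algebra_simps)
      then show "G x \<le> H x"
        unfolding G_def H_def using xy assms(1,4) \<open>y \<le> b\<close> by (simp add: powr_mono2)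
    qed (use False s H G assms in auto)
  qed
  then show ?thesis
    unfolding H_def G_def .
qed

lemma exists_line_start:
  assumes g: "g \<in> {0..<b}" and \<beta>: "0 \<le> \<beta>" and "0 < c" "b \<le> \<delta>"
    and above: "\<And>t. t \<in> {0..g} \<Longrightarrow> h t \<le> c * (\<delta> - t)"
    and tail: "integral {g..\<delta>} (\<lambda>t. (c * (\<delta> - t)) powr \<beta>) = integral {g..b} (\<lambda>t. h t powr \<beta>)"
  shows "\<exists>\<gamma>\<in>{0..g}. integral {\<gamma>..\<delta>} (\<lambda>t. (c * (\<delta> - t)) powr \<beta>) = integral {0..b} (\<lambda>t. h t powr \<beta>) \<and>
    integral {\<gamma>..g} (\<lambda>t. (c * (\<delta> - t)) powr \<beta>) = integral {0..g} (\<lambda>t. h t powr \<beta>)"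
proof -
  define P where "P t = h t powr \<beta>" for t
  define L where "L t = (c * (\<delta> - t)) powr \<beta>" for t
  have L_integrable: "L integrable_on {x..y}" if "0 \<le> x" "y \<le> \<delta>" for x y
    using that has_integral_powr_line[OF \<open>0 < c\<close>, of 0 \<delta> \<beta>] g \<beta> \<open>b \<le> \<delta>\<close> unfolding L_def
    by (auto intro: integrable_on_subinterval has_integral_integrable)
  have P_integrable: "P integrable_on {x..y}" if "0 \<le> x" "y \<le> b" for x y
    unfolding P_def using that powr_integrable[OF \<beta>] by (auto intro: integrable_on_subinterval)
  have "0 \<le> integral {0..g} P"
    using g P_integrable[of 0 g] by (intro integral_nonneg) (auto simp: P_def)
  have total: "integral {0..g} P + integral {g..b} P = integral {0..b} P"
    using g P_integrable[of 0 b] by (intro Henstock_Kurzweil_Integration.integral_combine) auto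
  have "P t \<le> L t" if "t \<in> {0..g}" for t
    unfolding P_def L_def using that g \<beta> nonneg[of t] above[OF that] by (intro powr_mono2) auto
  then have "integral {0..g} P \<le> integral {0..g} L"
    using g \<open>b \<le> \<delta>\<close> P_integrable[of 0 g] L_integrable[of 0 g] by (intro integral_le) auto
  moreover have "integral {0..g} L + integral {g..\<delta>} L = integral {0..\<delta>} L"
    using g \<open>b \<le> \<delta>\<close> L_integrable[of 0 \<delta>] by (intro Henstock_Kurzweil_Integration.integral_combine) auto
  ultimately have "integral {g..\<delta>} L \<le> integral {0..b} P" "integral {0..b} P \<le> integral {0..\<delta>} L"
    using tail total \<open>0 \<le> integral {0..g} P\<close> unfolding L_def P_def by linarith+
  then have "\<exists>\<gamma>\<in>{0..g}. integral {\<gamma>..\<delta>} L = integral {0..b} P"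
    using powr_line_integral_attains[OF \<open>0 < c\<close>, where d = \<delta> and g = g and \<beta> = \<beta>] g \<open>b \<le> \<delta>\<close> \<beta>
    unfolding L_def by simp
  then obtain \<gamma> where \<gamma>: "\<gamma> \<in> {0..g}" and whole: "integral {\<gamma>..\<delta>} L = integral {0..b} P"
    by blast
  have "integral {\<gamma>..g} L + integral {g..\<delta>} L = integral {\<gamma>..\<delta>} L"
    using \<gamma> g \<open>b \<le> \<delta>\<close> L_integrable[of \<gamma> \<delta>] by (intro Henstock_Kurzweil_Integration.integral_combine) auto
  then have "integral {\<gamma>..g} L = integral {0..g} P"
    using whole tail total unfolding L_def P_def by simp
  with \<gamma> whole show ?thesis
    unfolding L_def P_def by blast
qed

lemma exists_dominating_line:
  assumes g: "g \<in> {0<..<b}" and \<beta>: "0 < \<beta>"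
  shows "\<exists>\<gamma> \<delta> c. \<gamma> < \<delta> \<and> 0 < c \<and> c * (\<delta> - g) = h g \<and>
    integral {\<gamma>..\<delta>} (\<lambda>t. (c * (\<delta> - t)) powr \<beta>) = integral {0..b} (\<lambda>t. h t powr \<beta>) \<and>
    integral {g..\<delta>} (\<lambda>t. (c * (\<delta> - t)) powr \<beta>) = integral {g..b} (\<lambda>t. h t powr \<beta>) \<and>
    0 \<le> \<gamma> \<and> \<gamma> \<le> g \<and> b \<le> \<delta> \<and>
    (\<forall>s\<in>{0..\<delta>}. integral {s..\<delta>} (\<lambda>t. (if t \<le> b then h t else 0) powr \<beta>)
       \<le> integral {s..\<delta>} (\<lambda>t. (if t < \<gamma> then 0 else c * (\<delta> - t)) powr \<beta>))"
proof -
  obtain c \<delta> where "0 < c" and through: "c * (\<delta> - g) = h g" and "b \<le> \<delta>"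
    and balanced: "integral {g..b} (\<lambda>t. h t powr \<beta>) = c powr \<beta> * (\<delta> - g) powr (\<beta> + 1) / (\<beta> + 1)"
    using exists_balanced_line[OF g less_imp_le[OF \<beta>]] by blast
  have tail: "integral {g..\<delta>} (\<lambda>t. (c * (\<delta> - t)) powr \<beta>) = integral {g..b} (\<lambda>t. h t powr \<beta>)"
    using integral_unique[OF has_integral_powr_line[OF \<open>0 < c\<close>, of g \<delta> \<beta>]] g \<open>b \<le> \<delta>\<close> \<beta> balanced
    by simp
  have above: "h t \<le> c * (\<delta> - t)" if "t \<in> {0..g}" for t
    using le_balanced_line_on_head[OF g _ \<open>0 < c\<close> through balanced that] \<beta> by simp
  obtain \<gamma> where \<gamma>: "\<gamma> \<in> {0..g}"
    and whole: "integral {\<gamma>..\<delta>} (\<lambda>t. (c * (\<delta> - t)) powr \<beta>) = integral {0..b} (\<lambda>t. h t powr \<beta>)"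
    and head: "integral {\<gamma>..g} (\<lambda>t. (c * (\<delta> - t)) powr \<beta>) = integral {0..g} (\<lambda>t. h t powr \<beta>)"
    using exists_line_start[OF _ _ \<open>0 < c\<close> \<open>b \<le> \<delta>\<close> above tail] g \<beta> by auto
  have "\<forall>s\<in>{0..\<delta>}. integral {s..\<delta>} (\<lambda>t. (if t \<le> b then h t else 0) powr \<beta>)
       \<le> integral {s..\<delta>} (\<lambda>t. (if t < \<gamma> then 0 else c * (\<delta> - t)) powr \<beta>)"
    using tail_integral_le_truncated_line[OF _ \<open>0 < c\<close> _ _ _ \<open>b \<le> \<delta>\<close> through _ head tail] \<gamma> g above \<beta>
    by auto
  then show ?thesis
    using \<gamma> g \<open>0 < c\<close> through whole tail \<open>b \<le> \<delta>\<close>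
    by (intro exI[of _ \<gamma>] exI[of _ \<delta>] exI[of _ c]) auto
qed

end

theorem mainTheorem6:
  fixes b \<alpha> \<beta> :: real and h :: "real \<Rightarrow> real"
  assumes "b > 0"
    and "concave_on {0..b} h"
    and "\<forall>t\<in>{0..b}. h t \<ge> 0"
    and "\<exists>t\<in>{0..b}. h t \<noteq> 0"
    and "\<alpha> > 0" and "\<beta> > 0"
  shows "\<exists>\<gamma> \<delta> c::real. \<gamma> < \<delta> \<and> c > 0 \<and>
    c * (\<delta> - galpha \<alpha> b h) = h (galpha \<alpha> b h) \<and>
    integral {\<gamma>..\<delta>} (\<lambda>t. (c * (\<delta> - t)) powr \<beta>) = integral {0..b} (\<lambda>t. h t powr \<beta>) \<and>
    integral {galpha \<alpha> b h..\<delta>} (\<lambda>t. (c * (\<delta> - t)) powr \<beta>)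
      = integral {galpha \<alpha> b h..b} (\<lambda>t. h t powr \<beta>) \<and>
    0 \<le> \<gamma> \<and> \<gamma> \<le> galpha \<alpha> b h \<and> galpha \<alpha> b h \<le> b \<and> b \<le> \<delta> \<and>
    (\<forall>s\<in>{0..\<delta>}.
       integral {s..\<delta>} (\<lambda>t. (if t \<le> b then h t else 0) powr \<beta>)
       \<le> integral {s..\<delta>} (\<lambda>t. (if t < \<gamma> then 0 else c * (\<delta> - t)) powr \<beta>))"
proof -
  interpret concave_profile b h
    using assms(1-4) by unfold_locales auto
  have g: "galpha \<alpha> b h \<in> {0<..<b}"
    using galpha_in_interior assms(5) by simp
  then show ?thesis
    using exists_dominating_line[OF g assms(6)] by auto
qed

end
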